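(* Let $N\ge2$ and $(b,a)\in\mathcal{M}=\mathbb{R}^N\times\mathbb{R}_{>0}^N$. Then for all $1\le j\le 2N$, $\lambda_j(S(b,a))=-\lambda_{2N+1-j}(b,a)$. If $N$ is even, then for all $1\le j\le N$, $\lambda_j^+(S(b,a))=-\lambda^+_{N+1-j}(b,a)$ and $\lambda_j^-(S(b,a))=-\lambda^-_{N+1-j}(b,a)$; if $N$ is odd, then for all $1\le j\le N$, $\lambda_j^+(S(b,a))=-\lambda^-_{N+1-j}(b,a)$ and $\lambda_j^-(S(b,a))=-\lambda^+_{N+1-j}(b,a)$. Moreover, for all $1\le k\le N-1$, $\gamma_k(S(b,a))=\gamma_{N-k}(b,a)$.
   Context: Indices of $(b,a)$ are mod $N$; $S(b,a)=(b',a')$ with $b'_j=-b_{N-j}$, $a'_j=a_{N-j-1}$. $L^\pm(b,a)$ is the $N\times N$ symmetric matrix with diagonal $b_1,\dots,b_N$, entries $(n,n+1),(n+1,n)$ equal to $a_n$ ($1\le n\le N-1$), and entries $(1,N),(N,1)$ equal to $\pm a_N$. $\lambda^\pm_1\le\dots\le\lambda^\pm_N$ are the eigenvalues of $L^\pm(b,a)$ in increasing order with multiplicity, and $\lambda_1\le\dots\le\lambda_{2N}$ are all eigenvalues of $L^+$ and $L^-$ together, in increasing order with multiplicity (these satisfy $\lambda_1<\lambda_2\le\lambda_3<\dots\le\lambda_{2N-1}<\lambda_{2N}$). The $k$-th gap length is $\gamma_k=\lambda_{2k+1}-\lambda_{2k}$. *)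

theory Defs
  imports "Jordan_Normal_Form.Char_Poly" "HOL-Computational_Algebra.Polynomial" "HOL-Library.Multiset"
begin

text \<open>A point (b,a) is a pair of functions nat => real; only the values at indices
1..N are relevant. Indices are read mod N with representatives in 1..N.\<close>

definition cyc :: "nat \<Rightarrow> int \<Rightarrow> nat" where
  "cyc N k = nat ((k - 1) mod int N + 1)"

definition S_map :: "nat \<Rightarrow> (nat \<Rightarrow> real) \<times> (nat \<Rightarrow> real) \<Rightarrow> (nat \<Rightarrow> real) \<times> (nat \<Rightarrow> real)" where
  "S_map N ba = (\<lambda>j. - fst ba (cyc N (int N - int j)), \<lambda>j. snd ba (cyc N (int N - int j - 1)))"

text \<open>L^{+-}(b,a), with s = 1 or s = -1. Matrix row/column index i (0-based) corresponds
to index i+1 of the paper. The entries (n,n+1),(n+1,n) contribute a_n for 1 <= n <= N-1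
and the corner entries (1,N),(N,1) contribute s*a_N; contributions are added
(this only matters when N = 2).\<close>
definition Lmat :: "nat \<Rightarrow> real \<Rightarrow> (nat \<Rightarrow> real) \<times> (nat \<Rightarrow> real) \<Rightarrow> real mat" where
  "Lmat N s ba = mat N N (\<lambda>(i,k).
      (if i = k then fst ba (i+1) else 0)
    + (if k = i + 1 then snd ba (i+1) else 0)
    + (if i = k + 1 then snd ba (k+1) else 0)
    + (if (i = 0 \<and> k = N - 1) \<or> (i = N - 1 \<and> k = 0) then s * snd ba N else 0))"

text \<open>Eigenvalues (with multiplicity) of a real matrix, in increasing order, as a list
(for a real symmetric matrix these are all roots of the characteristic polynomial).\<close>
definition eigs :: "real mat \<Rightarrow> real list" where
  "eigs M = sorted_list_of_multiset (proots (char_poly M))"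

definition lam_plus :: "nat \<Rightarrow> (nat \<Rightarrow> real) \<times> (nat \<Rightarrow> real) \<Rightarrow> nat \<Rightarrow> real" where
  "lam_plus N ba j = eigs (Lmat N 1 ba) ! (j - 1)"

definition lam_minus :: "nat \<Rightarrow> (nat \<Rightarrow> real) \<times> (nat \<Rightarrow> real) \<Rightarrow> nat \<Rightarrow> real" where
  "lam_minus N ba j = eigs (Lmat N (-1) ba) ! (j - 1)"

definition lam :: "nat \<Rightarrow> (nat \<Rightarrow> real) \<times> (nat \<Rightarrow> real) \<Rightarrow> nat \<Rightarrow> real" where
  "lam N ba j = sorted_list_of_multiset
      (proots (char_poly (Lmat N 1 ba)) + proots (char_poly (Lmat N (-1) ba))) ! (j - 1)"

definition gap :: "nat \<Rightarrow> (nat \<Rightarrow> real) \<times> (nat \<Rightarrow> real) \<Rightarrow> nat \<Rightarrow> real" where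
  "gap N ba k = lam N ba (2*k+1) - lam N ba (2*k)"

end

theory Submission
  imports Defs
begin

text \<open>
  Relabelling the sites by
  j \<mapsto> N - j (mod N) and conjugating with a diagonal matrix of signs (-1)^j, which flips the
  nearest-neighbour couplings, shows that L^\<plusminus>(S(b,a)) is similar to -L^s(b,a) with
  s = \<plusminus>(-1)^N; the factor (-1)^N appears because an alternating sign pattern around a cycle
  of odd length cannot flip every coupling. Real symmetric matrices have real spectra, so the
  characteristic polynomials split over the reals, and the eigenvalue lists of S(b,a) are those
  of (b,a) negated and reversed; the gap identity is a reindexing of this.
\<close>

lemma proots_linear_factors: "proots (\<Prod>a\<leftarrow>as. [:- a, 1:]) = mset (as :: 'a :: idom list)"
proof (induction as)
  case (Cons a as)
  have "(\<Prod>a\<leftarrow>as. [:- a, 1:]) \<noteq> 0"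
    by (auto simp: prod_list_zero_iff)
  with Cons show ?case
    by (simp add: proots_mult del: mult_pCons_left)
qed simp

lemma poly_linear_factors: "poly (\<Prod>a\<leftarrow>as. [:- a, 1:]) x = (\<Prod>a\<leftarrow>as. x - (a :: 'a :: comm_ring_1))"
  by (induction as) (auto simp: algebra_simps)

lemma sorted_list_of_multiset_image_uminus:
  "sorted_list_of_multiset (image_mset uminus M) = rev (map uminus (sorted_list_of_multiset (M :: 'a :: linordered_ab_group_add multiset)))"
proof -
  define xs where "xs = sorted_list_of_multiset M"
  have "sorted (rev (map uminus xs))"
    unfolding xs_def sorted_wrt_rev sorted_wrt_map by (rule sorted_wrt_mono_rel[rotated]) auto
  then have "sort (map uminus xs) = rev (map uminus xs)"
    by (intro properties_for_sort) simp_all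
  moreover have "image_mset uminus M = mset (map uminus xs)"
    unfolding xs_def by simp
  ultimately show ?thesis
    by (simp only: xs_def sorted_list_of_multiset_mset)
qed

lemma nth_sorted_list_of_multiset_image_uminus:
  fixes M :: "'a :: linordered_ab_group_add multiset"
  assumes "j < size M"
  shows "sorted_list_of_multiset (image_mset uminus M) ! j = - sorted_list_of_multiset M ! (size M - 1 - j)"
proof -
  have "length (sorted_list_of_multiset M) = size M"
    by (metis mset_sorted_list_of_multiset size_mset)
  with assms show ?thesis
    by (simp add: sorted_list_of_multiset_image_uminus rev_nth)
qed

lemma real_symmetric_eigenvalue_real:
  fixes A :: "real mat" and z :: complex
  assumes A: "A \<in> carrier_mat n n" and sym: "\<And>i k. i < n \<Longrightarrow> k < n \<Longrightarrow> A $$ (i,k) = A $$ (k,i)"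
    and ev: "eigenvalue (map_mat complex_of_real A) z"
  shows "z \<in> \<real>"
proof -
  obtain v where v: "v \<in> carrier_vec n" "v \<noteq> 0\<^sub>v n" "map_mat complex_of_real A *\<^sub>v v = z \<cdot>\<^sub>v v"
    using ev A unfolding eigenvalue_def eigenvector_def by auto
  have Av: "(\<Sum>k<n. of_real (A $$ (i,k)) * v $ k) = z * v $ i" if "i < n" for i
    using arg_cong[OF v(3), of "\<lambda>w. w $ i"] that A v(1)
    by (auto simp: scalar_prod_def lessThan_atLeast0)
  \<comment> \<open>The Hermitian form \<open>v\<^sup>* A v\<close> equals \<open>z |v|\<^sup>2\<close> and is real by symmetry of \<open>A\<close>.\<close>
  define Q where "Q = (\<Sum>i<n. cnj (v $ i) * (\<Sum>k<n. of_real (A $$ (i,k)) * v $ k))"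
  define r where "r = (\<Sum>i<n. (cmod (v $ i))\<^sup>2)"
  have "Q = z * of_real r"
  proof -
    have "Q = (\<Sum>i<n. z * (cnj (v $ i) * v $ i))"
      unfolding Q_def by (rule sum.cong) (auto simp: Av)
    also have "\<dots> = z * (\<Sum>i<n. of_real ((cmod (v $ i))\<^sup>2))"
      unfolding sum_distrib_left by (intro sum.cong refl) (metis complex_norm_square mult.commute)
    finally show ?thesis
      unfolding r_def by simp
  qed
  moreover have "cnj Q = Q"
  proof -
    have "cnj Q = (\<Sum>i<n. \<Sum>k<n. v $ i * (of_real (A $$ (i,k)) * cnj (v $ k)))"
      unfolding Q_def by (simp add: sum_distrib_left)
    also have "\<dots> = (\<Sum>k<n. \<Sum>i<n. v $ i * (of_real (A $$ (i,k)) * cnj (v $ k)))"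
      by (rule sum.swap)
    also have "\<dots> = Q"
      unfolding Q_def sum_distrib_left by (intro sum.cong refl) (auto simp: sym mult_ac)
    finally show ?thesis .
  qed
  moreover have "r > 0"
  proof -
    obtain i where i: "i < n" "v $ i \<noteq> 0"
      using v(1,2) by (metis carrier_vecD eq_vecI index_zero_vec(1,2))
    then have "0 < (cmod (v $ i))\<^sup>2" by simp
    also have "\<dots> \<le> r"
      unfolding r_def by (rule member_le_sum) (use i in auto)
    finally show ?thesis .
  qed
  ultimately have "cnj z = z"
    by (metis complex_cnj_complex_of_real complex_cnj_mult mult_cancel_right of_real_eq_0_iff less_irrefl)
  then show ?thesis
    using Reals_cnj_iff by blast
qed

lemma char_poly_real_symmetric_factorized:
  fixes A :: "real mat"
  assumes A: "A \<in> carrier_mat n n" and sym: "\<And>i k. i < n \<Longrightarrow> k < n \<Longrightarrow> A $$ (i,k) = A $$ (k,i)"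
  shows "\<exists>as. char_poly A = (\<Prod>a\<leftarrow>as. [:- a, 1:]) \<and> length as = n"
proof -
  let ?C = "map_mat complex_of_real A"
  have C: "?C \<in> carrier_mat n n" using A by auto
  obtain cs where cs: "char_poly ?C = (\<Prod>c\<leftarrow>cs. [:- c, 1:])" "length cs = n"
    using char_poly_factorized[OF C] by blast
  have real: "c \<in> \<real>" if "c \<in> set cs" for c
  proof -
    have "poly (char_poly ?C) c = 0"
      unfolding cs poly_linear_factors using that by (simp add: prod_list_zero_iff)
    then show ?thesis
      using real_symmetric_eigenvalue_real[OF A sym] eigenvalue_root_char_poly[OF C] by blast
  qed
  have "poly (char_poly A) x = poly (\<Prod>a\<leftarrow>map Re cs. [:- a, 1:]) x" for x
  proof -
    have "complex_of_real (poly (char_poly A) x) = poly (char_poly ?C) (of_real x)"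
      unfolding of_real_hom.char_poly_hom[OF A] by simp
    also have "\<dots> = (\<Prod>c\<leftarrow>cs. of_real x - c)"
      unfolding cs poly_linear_factors ..
    also have "\<dots> = (\<Prod>c\<leftarrow>cs. of_real (x - Re c))"
      using real by (intro arg_cong[where f = prod_list] map_cong refl)
        (auto simp: complex_is_Real_iff complex_eq_iff)
    also have "\<dots> = of_real (\<Prod>a\<leftarrow>map Re cs. x - a)"
      by (induction cs) auto
    finally show ?thesis
      unfolding poly_linear_factors using of_real_eq_iff by blast
  qed
  then have "char_poly A = (\<Prod>a\<leftarrow>map Re cs. [:- a, 1:])"
    using poly_eq_poly_eq_iff by blast
  with cs(2) show ?thesis
    by (metis length_map)
qed

lemma poly_char_poly_uminus:
  fixes A :: "'a :: field mat"
  assumes A: "A \<in> carrier_mat n n"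
  shows "poly (char_poly (- A)) x = (-1) ^ n * poly (char_poly A) (- x)"
proof -
  have "- char_matrix (- A) x = char_matrix A (- x)"
    by (rule eq_matI) (use A in \<open>auto simp: char_matrix_def\<close>)
  then have "poly (char_poly (- A)) x = det (char_matrix A (- x))"
    using A by (simp add: char_poly_matrix[of _ n])
  moreover have "- char_matrix A (- x) = (-1) \<cdot>\<^sub>m char_matrix A (- x)"
    by (rule eq_matI) (use A in \<open>auto simp: char_matrix_def\<close>)
  then have "poly (char_poly A) (- x) = (-1) ^ n * det (char_matrix A (- x))"
    using A by (simp add: char_poly_matrix[OF A] char_matrix_def)
  ultimately show ?thesis
    by (simp flip: power_mult_distrib)
qed

lemma char_poly_uminus_factorized:
  fixes A :: "real mat"
  assumes A: "A \<in> carrier_mat n n"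
    and cp: "char_poly A = (\<Prod>a\<leftarrow>as. [:- a, 1:])" and len: "length as = n"
  shows "char_poly (- A) = (\<Prod>a\<leftarrow>map uminus as. [:- a, 1:])"
proof -
  have neg: "(-1) ^ length as * (\<Prod>a\<leftarrow>as. - x - a) = (\<Prod>a\<leftarrow>map uminus as. x - a)" for x :: real
    by (induction as) (auto simp: algebra_simps)
  have "poly (char_poly (- A)) x = poly (\<Prod>a\<leftarrow>map uminus as. [:- a, 1:]) x" for x
    unfolding poly_char_poly_uminus[OF A] cp poly_linear_factors len[symmetric] neg ..
  then show ?thesis
    using poly_eq_poly_eq_iff by blast
qed

lemma proots_char_poly_uminus:
  fixes A :: "real mat"
  assumes "A \<in> carrier_mat n n" and "char_poly A = (\<Prod>a\<leftarrow>as. [:- a, 1:])" and "length as = n"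
  shows "proots (char_poly (- A)) = image_mset uminus (proots (char_poly A))"
  unfolding char_poly_uminus_factorized[OF assms] assms(2) proots_linear_factors by simp

definition signed_perm_mat :: "nat \<Rightarrow> (nat \<Rightarrow> nat) \<Rightarrow> (nat \<Rightarrow> 'a) \<Rightarrow> 'a :: comm_ring_1 mat" where
  "signed_perm_mat n \<sigma> \<epsilon> = mat n n (\<lambda>(i,j). if j = \<sigma> i then \<epsilon> i else 0)"

lemma signed_perm_mat_carrier [simp]: "signed_perm_mat n \<sigma> \<epsilon> \<in> carrier_mat n n"
  and dim_row_signed_perm_mat [simp]: "dim_row (signed_perm_mat n \<sigma> \<epsilon>) = n"
  and dim_col_signed_perm_mat [simp]: "dim_col (signed_perm_mat n \<sigma> \<epsilon>) = n"
  by (simp_all add: signed_perm_mat_def)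

lemma signed_perm_mat_mult:
  assumes "\<And>i. i < n \<Longrightarrow> \<sigma> i < n"
  shows "signed_perm_mat n \<sigma> \<epsilon> * signed_perm_mat n \<tau> \<delta> = signed_perm_mat n (\<tau> \<circ> \<sigma>) (\<lambda>i. \<epsilon> i * \<delta> (\<sigma> i))"
proof (rule eq_matI)
  fix i k assume "i < dim_row (signed_perm_mat n (\<tau> \<circ> \<sigma>) (\<lambda>i. \<epsilon> i * \<delta> (\<sigma> i)))"
    "k < dim_col (signed_perm_mat n (\<tau> \<circ> \<sigma>) (\<lambda>i. \<epsilon> i * \<delta> (\<sigma> i)))"
  then have ik: "i < n" "k < n" by (auto simp: signed_perm_mat_def)
  with assms show "(signed_perm_mat n \<sigma> \<epsilon> * signed_perm_mat n \<tau> \<delta>) $$ (i,k)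
      = signed_perm_mat n (\<tau> \<circ> \<sigma>) (\<lambda>i. \<epsilon> i * \<delta> (\<sigma> i)) $$ (i,k)"
    by (simp add: signed_perm_mat_def scalar_prod_def if_distrib[where f = "\<lambda>x. x * y" for y] cong: if_cong)
qed (simp_all add: signed_perm_mat_def)

lemma signed_perm_mat_eq_one:
  assumes "\<And>i. i < n \<Longrightarrow> \<sigma> i = i \<and> \<epsilon> i = 1"
  shows "signed_perm_mat n \<sigma> \<epsilon> = 1\<^sub>m n"
  by (rule eq_matI) (use assms in \<open>auto simp: signed_perm_mat_def\<close>)

lemma signed_perm_mat_conjugate:
  assumes B: "B \<in> carrier_mat n n"
    and \<sigma>: "\<And>i. i < n \<Longrightarrow> \<sigma> i < n" "\<And>i. i < n \<Longrightarrow> \<sigma> (\<sigma> i) = i"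
  shows "signed_perm_mat n \<sigma> \<epsilon> * B * signed_perm_mat n \<sigma> (\<epsilon> \<circ> \<sigma>)
    = mat n n (\<lambda>(i,k). \<epsilon> i * \<epsilon> k * B $$ (\<sigma> i, \<sigma> k))"
proof (rule eq_matI)
  fix i k assume "i < dim_row (mat n n (\<lambda>(i,k). \<epsilon> i * \<epsilon> k * B $$ (\<sigma> i, \<sigma> k)))"
    "k < dim_col (mat n n (\<lambda>(i,k). \<epsilon> i * \<epsilon> k * B $$ (\<sigma> i, \<sigma> k)))"
  then have ik: "i < n" "k < n" by auto
  have PB: "(signed_perm_mat n \<sigma> \<epsilon> * B) $$ (i,j) = \<epsilon> i * B $$ (\<sigma> i, j)" if "j < n" for j
    using ik that B \<sigma> by (simp add: signed_perm_mat_def scalar_prod_def if_distrib if_distribR sum.delta' cong: if_cong)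
  have Q: "signed_perm_mat n \<sigma> (\<epsilon> \<circ> \<sigma>) $$ (j,k) = (if j = \<sigma> k then \<epsilon> k else 0)" if "j < n" for j
    using ik that \<sigma> by (auto simp: signed_perm_mat_def)
  have "(signed_perm_mat n \<sigma> \<epsilon> * B * signed_perm_mat n \<sigma> (\<epsilon> \<circ> \<sigma>)) $$ (i,k)
      = (\<Sum>j\<in>{0..<n}. (signed_perm_mat n \<sigma> \<epsilon> * B) $$ (i,j) * signed_perm_mat n \<sigma> (\<epsilon> \<circ> \<sigma>) $$ (j,k))"
    using ik B by (simp add: scalar_prod_def)
  also have "\<dots> = (\<Sum>j\<in>{0..<n}. if j = \<sigma> k then \<epsilon> i * \<epsilon> k * B $$ (\<sigma> i, j) else 0)"
    by (rule sum.cong) (auto simp: PB Q)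
  also have "\<dots> = mat n n (\<lambda>(i,k). \<epsilon> i * \<epsilon> k * B $$ (\<sigma> i, \<sigma> k)) $$ (i,k)"
    using ik \<sigma> by simp
  finally show "(signed_perm_mat n \<sigma> \<epsilon> * B * signed_perm_mat n \<sigma> (\<epsilon> \<circ> \<sigma>)) $$ (i,k)
      = mat n n (\<lambda>(i,k). \<epsilon> i * \<epsilon> k * B $$ (\<sigma> i, \<sigma> k)) $$ (i,k)" .
qed (use B in simp_all)

lemma similar_mat_signed_permutation:
  fixes B :: "'a :: comm_ring_1 mat"
  assumes B: "B \<in> carrier_mat n n"
    and \<sigma>: "\<And>i. i < n \<Longrightarrow> \<sigma> i < n" "\<And>i. i < n \<Longrightarrow> \<sigma> (\<sigma> i) = i"
    and \<epsilon>: "\<And>i. i < n \<Longrightarrow> \<epsilon> i * \<epsilon> i = 1"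
  shows "similar_mat (mat n n (\<lambda>(i,k). \<epsilon> i * \<epsilon> k * B $$ (\<sigma> i, \<sigma> k))) B"
proof -
  let ?P = "signed_perm_mat n \<sigma> \<epsilon>" and ?Q = "signed_perm_mat n \<sigma> (\<epsilon> \<circ> \<sigma>)"
  have "?P * ?Q = 1\<^sub>m n" "?Q * ?P = 1\<^sub>m n"
    using \<sigma> \<epsilon> by (simp_all add: signed_perm_mat_mult signed_perm_mat_eq_one)
  with B show ?thesis
    by (intro similar_matI[of _ _ ?P ?Q n]) (simp_all add: signed_perm_mat_conjugate[OF B \<sigma>])
qed

lemma cyc_eq_self: "1 \<le> k \<Longrightarrow> k \<le> int N \<Longrightarrow> cyc N k = nat k"
  unfolding cyc_def by (simp add: mod_pos_pos_trivial)

lemma cyc_0: "N > 0 \<Longrightarrow> cyc N 0 = N"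
  unfolding cyc_def by (simp add: zmod_minus1)

lemma cyc_minus_1:
  assumes "N \<ge> 2"
  shows "cyc N (-1) = N - 1"
proof -
  have "(-2 :: int) mod int N = (-2 + int N) mod int N" by simp
  also have "\<dots> = int N - 2" using assms by (subst mod_pos_pos_trivial) auto
  finally show ?thesis
    unfolding cyc_def using assms by simp
qed

lemma fst_S_map:
  assumes "N \<ge> 2" "i < N"
  shows "fst (S_map N (b,a)) (i+1) = - b (if i = N-1 then N else N-1-i)"
proof (cases "i = N-1")
  case True
  then show ?thesis
    unfolding S_map_def using assms cyc_0[of N] by (simp add: of_nat_diff)
next
  case False
  then have "cyc N (int N - int (i+1)) = N - 1 - i"
    using assms cyc_eq_self[of "int N - int (i+1)" N] by auto
  with False show ?thesis
    unfolding S_map_def by simp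
qed

lemma snd_S_map:
  assumes "N \<ge> 2" "i < N"
  shows "snd (S_map N (b,a)) (i+1) = a (if i = N-1 then N-1 else if i = N-2 then N else N-2-i)"
proof -
  consider "i = N-1" | "i = N-2" | "i < N-2" using assms by linarith
  then show ?thesis
  proof cases
    case 1
    then have "int N - int (i+1) - 1 = -1" using assms by auto
    with 1 show ?thesis unfolding S_map_def using assms cyc_minus_1 by simp
  next
    case 2
    then have "int N - int (i+1) - 1 = 0" using assms by auto
    with 2 show ?thesis unfolding S_map_def using assms cyc_0[of N] by auto
  next
    case 3
    then have "cyc N (int N - int (i+1) - 1) = N - 2 - i"
      using cyc_eq_self[of "int N - int (i+1) - 1" N] by auto
    with 3 show ?thesis unfolding S_map_def by simp
  qed
qed

lemma snd_S_map_last: "N \<ge> 2 \<Longrightarrow> snd (S_map N (b,a)) N = a (N-1)"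
  using snd_S_map[of N "N-1" b a] by simp

lemma Lmat_carrier [simp]: "Lmat N s ba \<in> carrier_mat N N"
  and dim_row_Lmat [simp]: "dim_row (Lmat N s ba) = N"
  and dim_col_Lmat [simp]: "dim_col (Lmat N s ba) = N"
  unfolding Lmat_def by simp_all

lemma index_Lmat:
  "i < N \<Longrightarrow> k < N \<Longrightarrow> Lmat N s ba $$ (i,k) =
      (if i = k then fst ba (i+1) else 0)
    + (if k = i + 1 then snd ba (i+1) else 0)
    + (if i = k + 1 then snd ba (k+1) else 0)
    + (if (i = 0 \<and> k = N - 1) \<or> (i = N - 1 \<and> k = 0) then s * snd ba N else 0)"
  unfolding Lmat_def by simp

lemma index_uminus_Lmat: "i < N \<Longrightarrow> k < N \<Longrightarrow> (- Lmat N s ba) $$ (i,k) = - (Lmat N s ba $$ (i,k))"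
  by simp

lemma Lmat_symmetric: "i < N \<Longrightarrow> k < N \<Longrightarrow> Lmat N s ba $$ (i,k) = Lmat N s ba $$ (k,i)"
  by (auto simp: index_Lmat add_ac)

lemma char_poly_Lmat_factorized: "\<exists>as. char_poly (Lmat N s ba) = (\<Prod>a\<leftarrow>as. [:- a, 1:]) \<and> length as = N"
  by (rule char_poly_real_symmetric_factorized[OF Lmat_carrier Lmat_symmetric])

lemma size_proots_char_poly_Lmat: "size (proots (char_poly (Lmat N s ba))) = N"
  using char_poly_Lmat_factorized[of N s ba] by (auto simp: proots_linear_factors)

text \<open>In 0-based matrix indices, the relabelling j \<mapsto> N - j (mod N) fixes the last index and
  reverses the others; the signs are (-1)^i except at the last index, whose sign also moves the
  boundary twist from the coupling (N-1, N) to the corner.\<close>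

definition reflect_index :: "nat \<Rightarrow> nat \<Rightarrow> nat" where
  "reflect_index N i = (if i = N - 1 then N - 1 else N - 2 - i)"

definition S_sign :: "nat \<Rightarrow> real \<Rightarrow> nat \<Rightarrow> real" where
  "S_sign N s i = (if i = N - 1 then - s else (-1) ^ i)"

lemma reflect_index_less: "N \<ge> 2 \<Longrightarrow> i < N \<Longrightarrow> reflect_index N i < N"
  by (auto simp: reflect_index_def)

lemma index_Lmat_S_map:
  assumes N: "N \<ge> 2" and ik: "i < N" "k < N"
  shows "Lmat N s (S_map N (b,a)) $$ (i,k) =
      (if i = k then - b (if i = N-1 then N else N-1-i) else 0)
    + (if k = i + 1 then a (if i = N-1 then N-1 else if i = N-2 then N else N-2-i) else 0)
    + (if i = k + 1 then a (if k = N-1 then N-1 else if k = N-2 then N else N-2-k) else 0)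
    + (if (i = 0 \<and> k = N - 1) \<or> (i = N - 1 \<and> k = 0) then s * a (N-1) else 0)"
  unfolding index_Lmat[OF ik] fst_S_map[OF N ik(1)] snd_S_map[OF N ik(1)] snd_S_map[OF N ik(2)]
    snd_S_map_last[OF N] ..

lemma Lmat_S_map_entry_upper:
  assumes N: "N \<ge> 2" and s: "s = 1 \<or> s = -1" and ik: "i < N" "k < N" "i \<le> k"
  shows "Lmat N s (S_map N (b,a)) $$ (i,k)
    = S_sign N s i * S_sign N s k * (- Lmat N ((-1)^N * s) (b,a)) $$ (reflect_index N i, reflect_index N k)"
proof -
  obtain n where n: "N = n + 2"
    using N by (metis add.commute le_Suc_ex)
  have ss: "s * (s * x) = x" for x
    using s by auto
  have refl: "reflect_index (Suc (Suc m)) j = (if j = m + 1 then m + 1 else m - j)"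
    and sign: "S_sign (Suc (Suc m)) s j = (if j = m + 1 then - s else (-1) ^ j)" for m j
    unfolding reflect_index_def S_sign_def by auto
  let ?i = "reflect_index N i" and ?k = "reflect_index N k"
  have ik': "?i < N" "?k < N"
    using reflect_index_less[OF N] ik by auto
  have R: "(- Lmat N ((-1)^N * s) (b,a)) $$ (?i, ?k) = - (
        (if ?i = ?k then b (?i + 1) else 0)
      + (if ?k = ?i + 1 then a (?i + 1) else 0)
      + (if ?i = ?k + 1 then a (?k + 1) else 0)
      + (if (?i = 0 \<and> ?k = N - 1) \<or> (?i = N - 1 \<and> ?k = 0) then (-1)^N * s * a N else 0))"
    unfolding index_uminus_Lmat[OF ik'] index_Lmat[OF ik'] fst_conv snd_conv ..
  note L = index_Lmat_S_map[OF N ik(1,2)]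
  consider "i = k" | "k = i + 1" "i < n" | "k = i + 1" "i = n" | "i + 2 \<le> k" "i = 0" "k = n + 1"
    | "i + 2 \<le> k" "0 < i \<or> k \<le> n"
    using ik n by linarith
  then show ?thesis
  proof cases
    case 1
    with ik show ?thesis
      unfolding L R using ss[of 1] by (auto simp: minus_one_power_iff refl sign n Suc_diff_le)
  next
    case 2
    then show ?thesis
      unfolding L R by (auto simp: minus_one_power_iff refl sign n Suc_diff_le)
  next
    case 3
    then show ?thesis
      unfolding L R using ss by (auto simp: minus_one_power_iff refl sign n algebra_simps)
  next
    case 4
    then show ?thesis
      unfolding L R using ss by (auto simp: minus_one_power_iff refl sign n)
  next
    case 5
    with ik show ?thesis
      unfolding L R by (auto simp: refl sign n)
  qed
qed

lemma Lmat_S_map_entry: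
  assumes N: "N \<ge> 2" and s: "s = 1 \<or> s = -1" and ik: "i < N" "k < N"
  shows "Lmat N s (S_map N (b,a)) $$ (i,k)
    = S_sign N s i * S_sign N s k * (- Lmat N ((-1)^N * s) (b,a)) $$ (reflect_index N i, reflect_index N k)"
proof (cases "i \<le> k")
  case False
  have "Lmat N s (S_map N (b,a)) $$ (i,k) = Lmat N s (S_map N (b,a)) $$ (k,i)"
    and "Lmat N ((-1)^N * s) (b,a) $$ (reflect_index N i, reflect_index N k)
      = Lmat N ((-1)^N * s) (b,a) $$ (reflect_index N k, reflect_index N i)"
    using ik reflect_index_less[OF N] by (auto intro: Lmat_symmetric)
  with False show ?thesis
    using Lmat_S_map_entry_upper[OF N s ik(2,1)] ik reflect_index_less[OF N] by simp
qed (use Lmat_S_map_entry_upper[OF N s ik] in auto)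

lemma char_poly_Lmat_S_map:
  assumes N: "N \<ge> 2" and s: "s = 1 \<or> s = -1"
  shows "char_poly (Lmat N s (S_map N (b,a))) = char_poly (- Lmat N ((-1)^N * s) (b,a))"
proof -
  let ?B = "- Lmat N ((-1)^N * s) (b,a)"
  have "Lmat N s (S_map N (b,a))
      = mat N N (\<lambda>(i,k). S_sign N s i * S_sign N s k * ?B $$ (reflect_index N i, reflect_index N k))"
    by (rule eq_matI) (simp_all add: Lmat_S_map_entry[OF N s])
  also have "similar_mat \<dots> ?B"
    using N s by (intro similar_mat_signed_permutation) (auto simp: reflect_index_def S_sign_def)
  finally show ?thesis
    by (rule char_poly_similar)
qed

lemma proots_char_poly_Lmat_S_map:
  assumes "N \<ge> 2" and "s = 1 \<or> s = -1"
  shows "proots (char_poly (Lmat N s (S_map N (b,a))))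
    = image_mset uminus (proots (char_poly (Lmat N ((-1)^N * s) (b,a))))"
proof -
  obtain as where "char_poly (Lmat N ((-1)^N * s) (b,a)) = (\<Prod>a\<leftarrow>as. [:- a, 1:])" "length as = N"
    using char_poly_Lmat_factorized by blast
  with assms show ?thesis
    unfolding char_poly_Lmat_S_map[OF assms] by (intro proots_char_poly_uminus) simp_all
qed

lemma proots_Lmat_S_map_both_signs:
  assumes "N \<ge> 2"
  shows "proots (char_poly (Lmat N 1 (S_map N (b,a)))) + proots (char_poly (Lmat N (-1) (S_map N (b,a))))
    = image_mset uminus (proots (char_poly (Lmat N 1 (b,a))) + proots (char_poly (Lmat N (-1) (b,a))))"
  using proots_char_poly_Lmat_S_map[OF assms, of 1] proots_char_poly_Lmat_S_map[OF assms, of "-1"]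
  by (cases "even N") (simp_all add: add.commute)

lemma lam_S_map:
  assumes "N \<ge> 2" and "j \<in> {1..2*N}"
  shows "lam N (S_map N (b,a)) j = - lam N (b,a) (2*N + 1 - j)"
proof -
  let ?M = "proots (char_poly (Lmat N 1 (b,a))) + proots (char_poly (Lmat N (-1) (b,a)))"
  have size: "size ?M = 2 * N"
    by (simp add: size_proots_char_poly_Lmat)
  have "lam N (S_map N (b,a)) j = sorted_list_of_multiset (image_mset uminus ?M) ! (j - 1)"
    unfolding lam_def proots_Lmat_S_map_both_signs[OF assms(1)] ..
  also have "\<dots> = - sorted_list_of_multiset ?M ! (size ?M - 1 - (j - 1))"
    using assms(2) size by (intro nth_sorted_list_of_multiset_image_uminus) auto
  also have "\<dots> = - lam N (b,a) (2*N + 1 - j)"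
    unfolding lam_def size using assms(2) by (simp add: Suc_diff_le)
  finally show ?thesis .
qed

lemma eigs_Lmat_S_map:
  assumes "N \<ge> 2" and "s = 1 \<or> s = -1" and "j < N"
  shows "eigs (Lmat N s (S_map N (b,a))) ! j = - eigs (Lmat N ((-1)^N * s) (b,a)) ! (N - 1 - j)"
  using assms unfolding eigs_def proots_char_poly_Lmat_S_map[OF assms(1,2)]
  by (simp add: nth_sorted_list_of_multiset_image_uminus size_proots_char_poly_Lmat)

lemma gap_S_map:
  assumes "N \<ge> 2" and "k \<in> {1..N-1}"
  shows "gap N (S_map N (b,a)) k = gap N (b,a) (N - k)"
proof -
  have k: "2*k + 1 \<in> {1..2*N}" "2*k \<in> {1..2*N}"
    and idx: "2*N + 1 - (2*k + 1) = 2 * (N - k)" "2*N + 1 - 2*k = 2 * (N - k) + 1"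
    using assms(2) by auto
  show ?thesis
    using lam_S_map[OF assms(1) k(1)] lam_S_map[OF assms(1) k(2)]
    unfolding gap_def idx by simp
qed

theorem lemma2p3:
  fixes N :: nat and b a :: "nat \<Rightarrow> real"
  assumes "N \<ge> 2"
    and "\<forall>n\<in>{1..N}. a n > 0"
  shows "(\<forall>j\<in>{1..2*N}. lam N (S_map N (b, a)) j = - lam N (b, a) (2*N + 1 - j))
    \<and> (even N \<longrightarrow> (\<forall>j\<in>{1..N}. lam_plus N (S_map N (b, a)) j = - lam_plus N (b, a) (N + 1 - j)
                          \<and> lam_minus N (S_map N (b, a)) j = - lam_minus N (b, a) (N + 1 - j)))
    \<and> (odd N \<longrightarrow> (\<forall>j\<in>{1..N}. lam_plus N (S_map N (b, a)) j = - lam_minus N (b, a) (N + 1 - j)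
                          \<and> lam_minus N (S_map N (b, a)) j = - lam_plus N (b, a) (N + 1 - j)))
    \<and> (\<forall>k\<in>{1..N-1}. gap N (S_map N (b, a)) k = gap N (b, a) (N - k))"
proof -
  have eigs: "eigs (Lmat N s (S_map N (b,a))) ! (j - 1) = - eigs (Lmat N ((-1)^N * s) (b,a)) ! (N + 1 - j - 1)"
    if "s = 1 \<or> s = -1" "j \<in> {1..N}" for s j
  proof -
    have "j - 1 < N" using that(2) by auto
    with that(2) show ?thesis
      using eigs_Lmat_S_map[OF assms(1) that(1)] by simp
  qed
  show ?thesis
    using assms(1) lam_S_map gap_S_map eigs[of 1] eigs[of "-1"]
    by (auto simp: lam_plus_def lam_minus_def)
qed

end
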